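(* Let $W_1,W_2,W_3\in\mathbb R^{n\times n}$, $J\in\mathbb R^n$, and $\Phi:\mathbb R^n\to\mathbb R^n$ with $\|\Phi(x)-\Phi(y)\|\le\|W_3(x-y)\|$ for all $x,y$ (Euclidean norm). Let $x^\star\in\mathbb R^n$ satisfy $W_1x^\star+W_2\Phi(x^\star)+J=0$. Suppose there exist $\delta>0$ and $\varepsilon>0$ with $$\tfrac12\big(W_1+W_1^T+\varepsilon W_2W_2^T+\varepsilon^{-1}W_3^TW_3\big)\le\delta I$$ (in the positive semidefinite order). Let $\epsilon_1,\epsilon_2>0$, $0<p<1$, $q>1$, $\bar\alpha=\epsilon_12^{(1+p)/2}$, $\bar\beta=\epsilon_2n^{(1-q)/2}2^{(1+q)/2}$, and assume $\bar\alpha-2\delta>0$, $\bar\beta-2\delta>0$. Then every solution of $$\dot x=W_1x+W_2\Phi(x)+J-\epsilon_1\mathrm{sig}^p(x-x^\star)-\epsilon_2\mathrm{sig}^q(x-x^\star)$$ satisfies $x(t)=x^\star$ for all $t\ge T_{\max}=\frac{2}{(\bar\alpha-2\delta)(1-p)}+\frac{2}{(\bar\beta-2\delta)(q-1)}$, whatever the initial value.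
   Context: For $x\in\mathbb R^n$ and $r>0$, $\mathrm{sig}^r(x)=(\mathrm{sign}(x^1)|x^1|^r,\dots,\mathrm{sign}(x^n)|x^n|^r)^T$. *)

theory Defs
  imports "HOL-Analysis.Analysis"
begin

definition sig :: "real \<Rightarrow> real^'n \<Rightarrow> real^'n" where
  "sig r x = (\<chi> i. sgn (x $ i) * \<bar>x $ i\<bar> powr r)"

definition psd :: "real^'n^'n \<Rightarrow> bool" where
  "psd M \<longleftrightarrow> (\<forall>v. 0 \<le> v \<bullet> (M *v v))"

definition loewner_le :: "real^'n^'n \<Rightarrow> real^'n^'n \<Rightarrow> bool" where
  "loewner_le A B \<longleftrightarrow> psd (B - A)"

end

theory Submission
  imports Defs
begin

text \<open>Along a solution, V = |x - x*|^2 / 2 satisfies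
  V' \<le> 2\<delta> V - \<alpha> V^m - \<beta> V^k with m = (1+p)/2 < 1 < k = (1+q)/2: the LMI, Young's inequality and
  the Lipschitz bound control the linear and nonlinear part by \<delta> |e|^2, while power-mean
  inequalities bound e \<bullet> sig^p e and e \<bullet> sig^q e from below. Hence V' \<le> -(\<beta>-2\<delta>) V^k while V \<ge> 1
  and V' \<le> -(\<alpha>-2\<delta>) V^m while V \<le> 1. In either regime V^(1-r)/(1-r) decreases at a constant
  rate, so V drops below 1 within 1/((\<beta>-2\<delta>)(k-1)) whatever V(0) is, and then reaches 0 within
  another 1/((\<alpha>-2\<delta>)(1-m)).\<close>

lemma powr_sum_le_sum_powr:
  fixes a :: "'i \<Rightarrow> real"
  assumes fin: "finite S" and nonneg: "\<And>i. i \<in> S \<Longrightarrow> a i \<ge> 0" and s: "0 < s" "s \<le> 1"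
  shows "(\<Sum>i\<in>S. a i) powr s \<le> (\<Sum>i\<in>S. a i powr s)"
proof -
  define T where "T = (\<Sum>i\<in>S. a i)"
  have "T \<ge> 0" unfolding T_def using nonneg by (simp add: sum_nonneg)
  show ?thesis
  proof (cases "T = 0")
    case True
    then show ?thesis using nonneg by (simp add: T_def sum_nonneg)
  next
    case False
    with \<open>T \<ge> 0\<close> have T: "T > 0" by simp
    have "a i / T \<le> (a i / T) powr s" if "i \<in> S" for i
    proof -
      have "a i \<le> T" unfolding T_def using fin nonneg that by (intro member_le_sum) auto
      then have "(a i / T) powr 1 \<le> (a i / T) powr s"
        using nonneg[OF that] T s by (intro powr_mono') auto
      then show ?thesis using nonneg[OF that] T by simp
    qed
    then have "1 \<le> (\<Sum>i\<in>S. (a i / T) powr s)"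
      using T sum_mono[of S "\<lambda>i. a i / T"] by (simp add: T_def sum_divide_distrib[symmetric])
    also have "\<dots> = (\<Sum>i\<in>S. a i powr s) / T powr s"
      using nonneg T by (simp add: powr_divide sum_divide_distrib)
    finally show ?thesis using T by (simp add: T_def field_simps)
  qed
qed

lemma card_powr_mult_powr_sum_le_sum_powr:
  fixes a :: "'i \<Rightarrow> real"
  assumes fin: "finite S" and nonneg: "\<And>i. i \<in> S \<Longrightarrow> a i \<ge> 0" and k: "k \<ge> 1"
  shows "real (card S) powr (1 - k) * (\<Sum>i\<in>S. a i) powr k \<le> (\<Sum>i\<in>S. a i powr k)"
proof -
  \<comment> \<open>Jensen only applies on the positive support, since the power is convex on (0, \<infinity>).\<close>
  define P where "P = {i\<in>S. a i > 0}"
  have "finite P" using fin by (simp add: P_def)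
  have sum_P: "(\<Sum>i\<in>S. f i) = (\<Sum>i\<in>P. f i)" if "\<And>i. i \<in> S \<Longrightarrow> a i = 0 \<Longrightarrow> f i = 0" for f
    unfolding P_def using fin nonneg that
    by (intro sum.mono_neutral_right) (auto simp: order.order_iff_strict)
  show ?thesis
  proof (cases "P = {}")
    case True
    then show ?thesis using sum_P[of a] sum_P[of "\<lambda>i. a i powr k"] by simp
  next
    case False
    define m where "m = real (card P)"
    have m: "m \<ge> 1" using False \<open>finite P\<close> by (simp add: m_def Suc_le_eq card_gt_0_iff)
    have "(\<Sum>i\<in>P. (1/m) *\<^sub>R a i) powr k \<le> (\<Sum>i\<in>P. (1/m) * a i powr k)"
      using convex_on_sum[OF \<open>finite P\<close> False powr_convex[OF k], of "\<lambda>_. 1/m" a] m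
      by (auto simp: m_def P_def)
    then have "((\<Sum>i\<in>P. a i) / m) powr k \<le> (\<Sum>i\<in>P. a i powr k) / m"
      by (simp add: sum_divide_distrib)
    then have "m powr (1 - k) * (\<Sum>i\<in>P. a i) powr k \<le> (\<Sum>i\<in>P. a i powr k)"
      using m by (simp add: powr_divide powr_diff field_simps)
    moreover have "real (card S) powr (1 - k) \<le> m powr (1 - k)"
      using fin m k by (intro powr_mono2') (auto simp: m_def P_def intro: card_mono)
    ultimately show ?thesis
      using sum_P[of a] sum_P[of "\<lambda>i. a i powr k"] by (simp add: order_trans[OF mult_right_mono])
  qed
qed

lemma inner_sig_eq_sum_powr:
  fixes e :: "real^'n"
  assumes r: "r > 0"
  shows "e \<bullet> sig r e = (\<Sum>i\<in>UNIV. ((e $ i)\<^sup>2) powr ((1 + r) / 2))"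
proof -
  have "y * (sgn y * \<bar>y\<bar> powr r) = (y\<^sup>2) powr ((1 + r) / 2)" for y :: real
  proof (cases "y = 0")
    case False
    have "y * (sgn y * \<bar>y\<bar> powr r) = \<bar>y\<bar> powr 1 * \<bar>y\<bar> powr r"
      by (metis abs_sgn mult.assoc powr_one' abs_abs)
    also have "\<dots> = \<bar>y\<bar> powr (1 + r)"
      by (rule powr_add[symmetric])
    also have "\<dots> = (\<bar>y\<bar> powr 2) powr ((1 + r) / 2)"
      unfolding powr_powr by (simp add: add_divide_distrib)
    finally show ?thesis using False by (simp add: powr_numeral)
  qed (use r in simp)
  then show ?thesis unfolding inner_vec_def sig_def by simp
qed

lemma inner_self_eq_sum_square: "(e::real^'n) \<bullet> e = (\<Sum>i\<in>UNIV. (e $ i)\<^sup>2)"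
  by (simp add: inner_vec_def power2_eq_square)

lemma powr_inner_self_le_inner_sig:
  fixes e :: "real^'n"
  assumes "0 < p" "p \<le> 1"
  shows "(e \<bullet> e) powr ((1 + p) / 2) \<le> e \<bullet> sig p e"
  unfolding inner_sig_eq_sum_powr[OF \<open>0 < p\<close>] inner_self_eq_sum_square
  using assms by (intro powr_sum_le_sum_powr) auto

lemma card_powr_inner_self_le_inner_sig:
  fixes e :: "real^'n"
  assumes "q \<ge> 1"
  shows "real CARD('n) powr ((1 - q) / 2) * (e \<bullet> e) powr ((1 + q) / 2) \<le> e \<bullet> sig q e"
proof -
  have exp: "1 - (1 + q) / 2 = (1 - q) / 2" by (simp add: field_simps)
  have "real CARD('n) powr (1 - (1 + q) / 2) * (\<Sum>i\<in>UNIV. (e $ i)\<^sup>2) powr ((1 + q) / 2)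
      \<le> (\<Sum>i\<in>UNIV. ((e $ i)\<^sup>2) powr ((1 + q) / 2))"
    using assms by (intro card_powr_mult_powr_sum_le_sum_powr) auto
  then show ?thesis
    using inner_sig_eq_sum_powr[of q e] assms unfolding exp inner_self_eq_sum_square by simp
qed

lemma inner_le_young:
  fixes u v :: "'a::real_inner"
  assumes "\<epsilon> > 0"
  shows "2 * (u \<bullet> v) \<le> \<epsilon> * (u \<bullet> u) + inverse \<epsilon> * (v \<bullet> v)"
proof -
  have "0 \<le> (sqrt \<epsilon> *\<^sub>R u - inverse (sqrt \<epsilon>) *\<^sub>R v) \<bullet> (sqrt \<epsilon> *\<^sub>R u - inverse (sqrt \<epsilon>) *\<^sub>R v)"
    by simp
  also have "\<dots> = \<epsilon> * (u \<bullet> u) + inverse \<epsilon> * (v \<bullet> v) - 2 * (u \<bullet> v)"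
    using assms by (simp add: inner_diff_left inner_diff_right inner_commute field_simps
        real_sqrt_mult[symmetric] power2_eq_square[symmetric])
  finally show ?thesis by simp
qed

lemma inner_le_of_loewner_le:
  fixes W1 W2 W3 :: "real^'n^'n" and e d :: "real^'n"
  assumes lip: "norm d \<le> norm (W3 *v e)" and "\<epsilon> > 0"
    and lmi: "loewner_le ((1/2) *\<^sub>R (W1 + transpose W1 + \<epsilon> *\<^sub>R (W2 ** transpose W2)
                 + inverse \<epsilon> *\<^sub>R (transpose W3 ** W3))) (\<delta> *\<^sub>R mat 1)"
  shows "e \<bullet> (W1 *v e + W2 *v d) \<le> \<delta> * (e \<bullet> e)"
proof -
  define u where "u = e v* W2"
  define M where "M = W1 + transpose W1 + \<epsilon> *\<^sub>R (W2 ** transpose W2) + inverse \<epsilon> *\<^sub>R (transpose W3 ** W3)"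
  have "e \<bullet> (M *v e) = 2 * (e \<bullet> (W1 *v e)) + \<epsilon> * (u \<bullet> u) + inverse \<epsilon> * ((W3 *v e) \<bullet> (W3 *v e))"
    by (simp add: M_def u_def matrix_vector_mult_add_rdistrib scaleR_matrix_vector_assoc[symmetric]
        matrix_vector_mul_assoc[symmetric] inner_add_right dot_lmul_matrix[symmetric] inner_commute)
  moreover have "0 \<le> e \<bullet> ((\<delta> *\<^sub>R mat 1 - (1/2) *\<^sub>R M) *v e)"
    using lmi unfolding loewner_le_def psd_def M_def by blast
  then have "e \<bullet> (M *v e) \<le> 2 * \<delta> * (e \<bullet> e)"
    by (simp add: matrix_vector_mult_diff_rdistrib scaleR_matrix_vector_assoc[symmetric] inner_diff_right)
  moreover have "2 * (u \<bullet> d) \<le> \<epsilon> * (u \<bullet> u) + inverse \<epsilon> * ((W3 *v e) \<bullet> (W3 *v e))"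
  proof -
    have "d \<bullet> d \<le> (W3 *v e) \<bullet> (W3 *v e)"
      using lip by (simp add: power2_norm_eq_inner[symmetric] power_mono)
    with inner_le_young[OF \<open>\<epsilon> > 0\<close>, of u d] \<open>\<epsilon> > 0\<close> show ?thesis
      by (smt (verit) inverse_positive_iff_positive mult_left_mono)
  qed
  moreover have "e \<bullet> (W2 *v d) = u \<bullet> d" by (simp add: u_def dot_lmul_matrix)
  ultimately show ?thesis by (simp add: inner_add_right)
qed

lemma closed_loop_inner_le:
  fixes W1 W2 W3 :: "real^'n^'n" and e d :: "real^'n" and v :: real
  assumes lip: "norm d \<le> norm (W3 *v e)" and \<epsilon>: "\<epsilon> > 0"
    and lmi: "loewner_le ((1/2) *\<^sub>R (W1 + transpose W1 + \<epsilon> *\<^sub>R (W2 ** transpose W2)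
                 + inverse \<epsilon> *\<^sub>R (transpose W3 ** W3))) (\<delta> *\<^sub>R mat 1)"
    and \<epsilon>1: "\<epsilon>1 \<ge> 0" and \<epsilon>2: "\<epsilon>2 \<ge> 0" and p: "0 < p" "p \<le> 1" and q: "q \<ge> 1"
    and v: "v = e \<bullet> e / 2"
  shows "e \<bullet> (W1 *v e + W2 *v d - \<epsilon>1 *\<^sub>R sig p e - \<epsilon>2 *\<^sub>R sig q e)
    \<le> 2 * \<delta> * v - \<epsilon>1 * 2 powr ((1 + p) / 2) * v powr ((1 + p) / 2)
       - \<epsilon>2 * real CARD('n) powr ((1 - q) / 2) * 2 powr ((1 + q) / 2) * v powr ((1 + q) / 2)"
proof -
  have ee: "e \<bullet> e = 2 * v" and "v \<ge> 0" unfolding v by simp_all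
  have "\<epsilon>1 * 2 powr ((1 + p) / 2) * v powr ((1 + p) / 2) \<le> \<epsilon>1 * (e \<bullet> sig p e)"
    using powr_inner_self_le_inner_sig[OF p, of e] \<epsilon>1 \<open>v \<ge> 0\<close>
    by (simp add: ee powr_mult mult.assoc mult_left_mono)
  moreover have "\<epsilon>2 * real CARD('n) powr ((1 - q) / 2) * 2 powr ((1 + q) / 2) * v powr ((1 + q) / 2)
      \<le> \<epsilon>2 * (e \<bullet> sig q e)"
    using card_powr_inner_self_le_inner_sig[OF q, of e] \<epsilon>2 \<open>v \<ge> 0\<close>
    by (simp add: ee powr_mult mult.assoc mult_left_mono)
  moreover have "e \<bullet> (W1 *v e + W2 *v d) \<le> 2 * \<delta> * v"
    using inner_le_of_loewner_le[OF lip \<epsilon> lmi] by (simp add: ee)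
  ultimately show ?thesis by (simp add: inner_diff_right)
qed

lemma powr_dissipation_le:
  fixes v \<delta> \<alpha> \<beta> m k :: real
  assumes "0 \<le> v" "0 \<le> \<delta>" "0 \<le> \<alpha>" "0 \<le> \<beta>" "m \<le> 1" "1 \<le> k"
  shows powr_dissipation_le_small:
      "v \<le> 1 \<Longrightarrow> 2 * \<delta> * v - \<alpha> * v powr m - \<beta> * v powr k \<le> - (\<alpha> - 2 * \<delta>) * v powr m"
    and powr_dissipation_le_large:
      "1 \<le> v \<Longrightarrow> 2 * \<delta> * v - \<alpha> * v powr m - \<beta> * v powr k \<le> - (\<beta> - 2 * \<delta>) * v powr k"
proof -
  assume "v \<le> 1"
  then have "v powr 1 \<le> v powr m" using assms by (intro powr_mono') auto
  then have "2 * \<delta> * v \<le> 2 * \<delta> * v powr m" using assms by (simp add: mult_left_mono)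
  moreover have "0 \<le> \<beta> * v powr k" using assms by simp
  ultimately show "2 * \<delta> * v - \<alpha> * v powr m - \<beta> * v powr k \<le> - (\<alpha> - 2 * \<delta>) * v powr m"
    by (simp add: algebra_simps)
next
  assume "1 \<le> v"
  then have "v powr 1 \<le> v powr k" using assms by (intro powr_mono) auto
  then have "2 * \<delta> * v \<le> 2 * \<delta> * v powr k" using assms by (simp add: mult_left_mono)
  moreover have "0 \<le> \<alpha> * v powr m" using assms by simp
  ultimately show "2 * \<delta> * v - \<alpha> * v powr m - \<beta> * v powr k \<le> - (\<beta> - 2 * \<delta>) * v powr k"
    by (simp add: algebra_simps)
qed

lemma powr_lyapunov_decrease:
  fixes V V' :: "real \<Rightarrow> real"
  assumes "a \<le> b" and cont: "continuous_on {a..b} V"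
    and der: "\<And>t. a < t \<Longrightarrow> t < b \<Longrightarrow> (V has_real_derivative V' t) (at t)"
    and pos: "\<And>t. a \<le> t \<Longrightarrow> t \<le> b \<Longrightarrow> V t > 0"
    and decay: "\<And>t. a < t \<Longrightarrow> t < b \<Longrightarrow> V' t \<le> - c * V t powr r"
    and "r \<noteq> 1"
  shows "c * (b - a) \<le> (V a powr (1 - r) - V b powr (1 - r)) / (1 - r)"
proof -
  define g where "g t = V t powr (1 - r) / (1 - r) + c * t" for t
  have "g b \<le> g a"
  proof (rule DERIV_nonpos_imp_decreasing_open[OF \<open>a \<le> b\<close>])
    show "continuous_on {a..b} g"
      unfolding g_def using pos \<open>r \<noteq> 1\<close> by (intro continuous_intros cont) force+
    fix t assume t: "a < t" "t < b"
    have "V t powr (- r) * V' t \<le> V t powr (- r) * (- c * V t powr r)"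
      using decay[OF t] by (rule mult_left_mono) simp
    also have "\<dots> = - c"
      using pos[of t] t by (simp add: powr_add[symmetric])
    finally have "V t powr (- r) * V' t + c \<le> 0" by simp
    moreover have "(g has_real_derivative V t powr (- r) * V' t + c) (at t)"
      unfolding g_def using der[OF t] pos[of t] t \<open>r \<noteq> 1\<close>
      by (auto intro!: derivative_eq_intros)
    ultimately show "\<exists>y. (g has_real_derivative y) (at t) \<and> y \<le> 0" by blast
  qed
  then show ?thesis by (simp add: g_def diff_divide_distrib algebra_simps)
qed

lemma powr_decay_below_one:
  fixes V V' :: "real \<Rightarrow> real"
  assumes cont: "continuous_on {a..b} V"
    and der: "\<And>t. a < t \<Longrightarrow> t < b \<Longrightarrow> (V has_real_derivative V' t) (at t)"
    and antimono: "\<And>s u. a \<le> s \<Longrightarrow> s \<le> u \<Longrightarrow> u \<le> b \<Longrightarrow> V u \<le> V s"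
    and decay: "\<And>t. a < t \<Longrightarrow> t < b \<Longrightarrow> V t \<ge> 1 \<Longrightarrow> V' t \<le> - c * V t powr r"
    and c: "c > 0" and r: "r > 1" and b: "b = a + 1 / (c * (r - 1))"
  shows "V b \<le> 1"
proof (rule ccontr)
  assume "\<not> V b \<le> 1"
  then have big: "V s > 1" if "a \<le> s" "s \<le> b" for s
    using antimono[OF that] by simp
  have "a \<le> b" using b c r by simp
  have "c * (b - a) \<le> (V a powr (1 - r) - V b powr (1 - r)) / (1 - r)"
    using \<open>a \<le> b\<close> r big
    by (intro powr_lyapunov_decrease[where V' = V'] cont der decay)
      (auto intro: less_imp_le less_trans[OF zero_less_one])
  moreover have "c * (b - a) = 1 / (r - 1)" using c by (simp add: b)
  ultimately have "V a powr (1 - r) + 1 \<le> V b powr (1 - r)"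
    using r by (smt (verit) divide_le_cancel minus_divide_divide)
  moreover have "V b powr (1 - r) < 1" using big[of b] \<open>a \<le> b\<close> r by (intro powr_less_one) auto
  moreover have "V a powr (1 - r) > 0" using big[of a] \<open>a \<le> b\<close> by simp
  ultimately show False by simp
qed

lemma powr_decay_to_zero:
  fixes V V' :: "real \<Rightarrow> real"
  assumes cont: "continuous_on {a..b} V"
    and der: "\<And>t. a < t \<Longrightarrow> t < b \<Longrightarrow> (V has_real_derivative V' t) (at t)"
    and antimono: "\<And>s u. a \<le> s \<Longrightarrow> s \<le> u \<Longrightarrow> u \<le> b \<Longrightarrow> V u \<le> V s"
    and decay: "\<And>t. a < t \<Longrightarrow> t < b \<Longrightarrow> V t \<le> 1 \<Longrightarrow> V' t \<le> - c * V t powr r"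
    and "V a \<le> 1" "V b \<ge> 0" and c: "c > 0" and r: "r < 1" and b: "b = a + 1 / (c * (1 - r))"
  shows "V b = 0"
proof (rule ccontr)
  assume "V b \<noteq> 0"
  with \<open>V b \<ge> 0\<close> have "V b > 0" by simp
  have "a \<le> b" using b c r by simp
  have "c * (b - a) \<le> (V a powr (1 - r) - V b powr (1 - r)) / (1 - r)"
  proof (rule powr_lyapunov_decrease[where V' = V'])
    show "V t > 0" if "a \<le> t" "t \<le> b" for t
      using antimono[OF that] \<open>V b > 0\<close> \<open>b \<ge> a\<close> by fastforce
    show "V' t \<le> - c * V t powr r" if "a < t" "t < b" for t
      using decay[OF that] antimono[of a t] \<open>V a \<le> 1\<close> that by simp
  qed (use \<open>a \<le> b\<close> r cont der in auto)
  moreover have "c * (b - a) = 1 / (1 - r)" using c by (simp add: b)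
  ultimately have "V b powr (1 - r) + 1 \<le> V a powr (1 - r)"
    using r by (simp add: divide_le_cancel)
  moreover have "V a powr (1 - r) \<le> 1"
    using \<open>V a \<le> 1\<close> antimono[of a b] \<open>V b > 0\<close> \<open>a \<le> b\<close> r by (intro powr_le1) auto
  moreover have "V b powr (1 - r) > 0" using \<open>V b > 0\<close> by simp
  ultimately show False by simp
qed

lemma fixed_time_settling:
  fixes V V' :: "real \<Rightarrow> real" and \<alpha> \<beta> \<delta> m k :: real
  assumes cont: "continuous_on {0..} V"
    and der: "\<And>t. t > 0 \<Longrightarrow> (V has_real_derivative V' t) (at t)"
    and nonneg: "\<And>t. t \<ge> 0 \<Longrightarrow> V t \<ge> 0"
    and bound: "\<And>t. t > 0 \<Longrightarrow> V' t \<le> 2 * \<delta> * V t - \<alpha> * V t powr m - \<beta> * V t powr k"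
    and \<delta>: "\<delta> \<ge> 0" and \<alpha>: "\<alpha> - 2 * \<delta> > 0" and \<beta>: "\<beta> - 2 * \<delta> > 0" and m: "m < 1" and k: "k > 1"
    and t: "t \<ge> 1 / ((\<beta> - 2 * \<delta>) * (k - 1)) + 1 / ((\<alpha> - 2 * \<delta>) * (1 - m))"
  shows "V t = 0"
proof -
  define T1 where "T1 = 1 / ((\<beta> - 2 * \<delta>) * (k - 1))"
  define T2 where "T2 = 1 / ((\<alpha> - 2 * \<delta>) * (1 - m))"
  have "T1 > 0" "T2 > 0" using \<alpha> \<beta> m k by (simp_all add: T1_def T2_def)
  have small: "V' s \<le> - (\<alpha> - 2 * \<delta>) * V s powr m" if "s > 0" "V s \<le> 1" for s
    using nonneg[of s] that \<delta> \<alpha> \<beta> m k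
    by (intro order_trans[OF bound powr_dissipation_le_small]) auto
  have large: "V' s \<le> - (\<beta> - 2 * \<delta>) * V s powr k" if "s > 0" "V s \<ge> 1" for s
    using nonneg[of s] that \<delta> \<alpha> \<beta> m k
    by (intro order_trans[OF bound powr_dissipation_le_large]) auto
  have antimono: "V u \<le> V s" if "0 \<le> s" "s \<le> u" for s u
  proof (rule DERIV_nonpos_imp_decreasing_open[OF that(2)])
    show "continuous_on {s..u} V" using cont that by (auto elim: continuous_on_subset)
    fix t assume "s < t" "t < u"
    then have "t > 0" using that by simp
    have "0 \<le> (\<alpha> - 2 * \<delta>) * V t powr m" "0 \<le> (\<beta> - 2 * \<delta>) * V t powr k" using \<alpha> \<beta> by simp_all
    then have "V' t \<le> 0"
      using small[OF \<open>t > 0\<close>] large[OF \<open>t > 0\<close>] by (cases "V t \<le> 1") linarith+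
    with der[OF \<open>t > 0\<close>] show "\<exists>y. (V has_real_derivative y) (at t) \<and> y \<le> 0" by blast
  qed
  have "V T1 \<le> 1"
    using \<open>T1 > 0\<close> \<beta> k
    by (intro powr_decay_below_one[where V = V and V' = V' and a = 0 and c = "\<beta> - 2 * \<delta>" and r = k]
        continuous_on_subset[OF cont] der large antimono)
      (auto simp: T1_def)
  then have "V (T1 + T2) = 0"
    using \<open>T1 > 0\<close> \<open>T2 > 0\<close> \<alpha> m nonneg[of "T1 + T2"]
    by (intro powr_decay_to_zero[where V = V and V' = V' and a = T1 and c = "\<alpha> - 2 * \<delta>" and r = m]
        continuous_on_subset[OF cont] der small antimono)
      (auto simp: T2_def)
  moreover have "T1 + T2 \<le> t" using t by (simp add: T1_def T2_def)
  ultimately show ?thesis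
    using antimono[of "T1 + T2" t] nonneg[of t] \<open>T1 > 0\<close> \<open>T2 > 0\<close> by simp
qed

lemma half_dist_squared_along_solution:
  fixes x F :: "real \<Rightarrow> 'a::real_inner"
  assumes sol: "\<And>t. t \<ge> 0 \<Longrightarrow> (x has_vector_derivative F t) (at t within {0..})"
  shows "continuous_on {0..} (\<lambda>t. (x t - c) \<bullet> (x t - c) / 2)"
    and "t > 0 \<Longrightarrow> ((\<lambda>t. (x t - c) \<bullet> (x t - c) / 2) has_real_derivative (x t - c) \<bullet> F t) (at t)"
proof -
  have "continuous_on {0..} x"
    unfolding continuous_on_eq_continuous_within
    using sol has_vector_derivative_continuous by (metis atLeast_iff)
  then show "continuous_on {0..} (\<lambda>t. (x t - c) \<bullet> (x t - c) / 2)"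
    by (intro continuous_intros) auto
next
  assume "t > 0"
  then have "at t within {0..} = at t"
    by (intro at_within_open_subset[of t "{0<..}"]) auto
  then have "(x has_derivative (\<lambda>h. h *\<^sub>R F t)) (at t)"
    using sol[of t] \<open>t > 0\<close> by (simp add: has_vector_derivative_def)
  then show "((\<lambda>t. (x t - c) \<bullet> (x t - c) / 2) has_real_derivative (x t - c) \<bullet> F t) (at t)"
    unfolding has_field_derivative_def
    by (auto intro!: derivative_eq_intros ext simp: inner_commute field_simps)
qed

theorem corollary2:
  fixes W1 W2 W3 :: "real^'n^'n"
    and J xstar :: "real^'n"
    and \<Phi> :: "real^'n \<Rightarrow> real^'n"
    and \<delta> \<epsilon> \<epsilon>1 \<epsilon>2 p q :: real
    and x :: "real \<Rightarrow> real^'n"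
  assumes lip: "\<And>u v. norm (\<Phi> u - \<Phi> v) \<le> norm (W3 *v (u - v))"
    and eq: "W1 *v xstar + W2 *v \<Phi> xstar + J = 0"
    and \<delta>pos: "\<delta> > 0" and \<epsilon>pos: "\<epsilon> > 0"
    and lmi: "loewner_le ((1/2) *\<^sub>R (W1 + transpose W1 + \<epsilon> *\<^sub>R (W2 ** transpose W2)
                 + inverse \<epsilon> *\<^sub>R (transpose W3 ** W3))) (\<delta> *\<^sub>R mat 1)"
    and \<epsilon>1: "\<epsilon>1 > 0" and \<epsilon>2: "\<epsilon>2 > 0"
    and p: "0 < p" "p < 1" and q: "q > 1"
    and a: "\<epsilon>1 * 2 powr ((1 + p) / 2) - 2 * \<delta> > 0"
    and b: "\<epsilon>2 * real CARD('n) powr ((1 - q) / 2) * 2 powr ((1 + q) / 2) - 2 * \<delta> > 0"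
    and sol: "\<And>t. t \<ge> 0 \<Longrightarrow> (x has_vector_derivative
                 (W1 *v x t + W2 *v \<Phi> (x t) + J - \<epsilon>1 *\<^sub>R sig p (x t - xstar)
                  - \<epsilon>2 *\<^sub>R sig q (x t - xstar))) (at t within {0..})"
  shows "\<forall>t \<ge> 2 / ((\<epsilon>1 * 2 powr ((1 + p) / 2) - 2 * \<delta>) * (1 - p))
              + 2 / ((\<epsilon>2 * real CARD('n) powr ((1 - q) / 2) * 2 powr ((1 + q) / 2) - 2 * \<delta>) * (q - 1)).
           x t = xstar"
proof -
  define \<alpha> where "\<alpha> = \<epsilon>1 * 2 powr ((1 + p) / 2)"
  define \<beta> where "\<beta> = \<epsilon>2 * real CARD('n) powr ((1 - q) / 2) * 2 powr ((1 + q) / 2)"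
  define V where "V t = (x t - xstar) \<bullet> (x t - xstar) / 2" for t
  note V = half_dist_squared_along_solution[OF sol, where c = xstar, folded V_def]
  have bound: "(x t - xstar) \<bullet> (W1 *v x t + W2 *v \<Phi> (x t) + J - \<epsilon>1 *\<^sub>R sig p (x t - xstar)
                  - \<epsilon>2 *\<^sub>R sig q (x t - xstar))
      \<le> 2 * \<delta> * V t - \<alpha> * V t powr ((1 + p) / 2) - \<beta> * V t powr ((1 + q) / 2)" for t
  proof -
    have "W1 *v x t + W2 *v \<Phi> (x t) + J = W1 *v (x t - xstar) + W2 *v (\<Phi> (x t) - \<Phi> xstar)"
      using eq by (simp add: matrix_vector_mult_diff_distrib algebra_simps)
    then show ?thesis
      using closed_loop_inner_le[OF lip[of "x t" xstar] \<epsilon>pos lmi, of \<epsilon>1 \<epsilon>2 p q "V t"] \<epsilon>1 \<epsilon>2 p q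
      by (simp add: V_def \<alpha>_def \<beta>_def mult.assoc)
  qed
  have exps: "(1 + q) / 2 - 1 = (q - 1) / 2" "1 - (1 + p) / 2 = (1 - p) / 2"
    by (simp_all add: field_simps)
  have "V t = 0" if "t \<ge> 2 / ((\<alpha> - 2 * \<delta>) * (1 - p)) + 2 / ((\<beta> - 2 * \<delta>) * (q - 1))" for t
    using that a b p q \<delta>pos
    by (intro fixed_time_settling[OF V(1) V(2) _ bound]) (auto simp: V_def \<alpha>_def \<beta>_def exps)
  then show ?thesis unfolding \<alpha>_def \<beta>_def V_def by simp
qed

end
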